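(* Let $\varphi=\bigwedge_{j\in G}B_j\omega_j$ be a DBI normal formula, where $\varnothing\neq G\subseteq\mathcal{A}$. (1) If $i\notin\mathsf{ta}(\varphi)$, i.e., $i\notin G$, then for every formula $\sigma$ and every pointed Kripke model $(\mathcal{M},v)$: $\mathcal{M},v\vDash B_i\sigma$ iff $\mathcal{M}\odot\mathcal{U}_\varphi,(v,0)\vDash B_i\sigma$. (2) If $i\in\mathsf{ta}(\varphi)$ but $\omega_i=\bigwedge_{j\in H}B_j\pi_j$ has no propositional component, then for every purely propositional formula $\chi$ and every pointed Kripke model $(\mathcal{M},v)$: $\mathcal{M},v\vDash B_i\chi$ iff $\mathcal{M}\odot\mathcal{U}_\varphi,(v,0)\vDash B_i\chi$.
   Context: Agents $\mathcal{A}=\{1,\dots,n\}$, $n>1$; language $\mathcal{L}$: $\varphi ::= p \mid \neg\varphi \mid (\varphi\wedge\varphi)\mid B_i\varphi$, $\top$ the usual tautology. Kripke model $\mathcal{M}=\langle S,R,V\rangle$ (nonempty $S$, $R_i\subseteq S\times S$, $V:\mathit{Prop}\to 2^S$), standard truth. Action model $\mathcal{U}=\langle E,Q,\mathsf{pre}\rangle$ (nonempty $E$, $Q_i\subseteq E\times E$, $\mathsf{pre}:E\to\mathcal{L}$). Pointed update of $(\mathcal{M},w)$ with $(\mathcal{U},\alpha)$, defined iff $\mathcal{M},w\vDash\mathsf{pre}(\alpha)$: with $T=\{(x,\beta)\in S\times E\mid\mathcal{M},x\vDash\mathsf{pre}(\beta)\}$, $\mathcal{M}\odot\mathcal{U}=\langle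 S^{\mathcal U},R^{\mathcal U},V^{\mathcal U}\rangle$ where $S^{\mathcal U}$ is the smallest subset of $T$ containing $(w,\alpha)$ closed under: $(x,\beta)\in S^{\mathcal U}$, $(u,\gamma)\in T$, $xR_iu$, $\beta Q_i\gamma$ imply $(u,\gamma)\in S^{\mathcal U}$; $R^{\mathcal U}_i$ relates $(x,\beta),(u,\gamma)\in S^{\mathcal U}$ iff $xR_iu$ and $\beta Q_i\gamma$; $V^{\mathcal U}(p)=\{(x,\beta)\in S^{\mathcal U}\mid x\in V(p)\}$. Target agents: $\mathsf{ta}(p)=\varnothing$, $\mathsf{ta}(\neg\phi)=\mathsf{ta}(\phi)$, $\mathsf{ta}(\phi\wedge\psi)=\mathsf{ta}(\phi)\cup\mathsf{ta}(\psi)$, $\mathsf{ta}(B_i\phi)=\{i\}$. DBI formulas: $\varphi ::= B_i\xi \mid B_i(\xi\wedge\varphi)\mid(\varphi\wedge\varphi)\mid B_i\varphi$, $\xi$ purely propositional. DBI normal: $B_i\xi$ always; $B_i\varphi$, $B_i(\xi\wedge\varphi)$ iff $\varphi$ DBI normal and $i\notin\mathsf{ta}(\varphi)$; $\varphi\wedge\psi$ iff both DBI normal and $\mathsf{ta}(\varphi)\cap\mathsf{ta}(\psi)=\varnothing$. Action model $\mathcal{U}_\varphi=\langle E^\varphi,Q^\varphi,\mathsf{pre}^\varphi\rangle$ for DBI normal $\varphi$, recursively; always $E^\varphi=\{0,-1\}\sqcup D^\varphi$, $\varnothing\ne D^\varphi\subseteq\{1,2,\dots\}$, $\mathsf{pre}^\varphi(0)=\mathsf{pre}^\varphi(-1)=\top$;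 $\underline{Q}_j:=Q_j\cap((E\setminus\{0\})\times(E\setminus\{0\}))$. (1) $\varphi=B_i\xi$: $D=\{m\}$, $\mathsf{pre}(m)=\xi$, $Q_j=\{(0,-1),(m,-1),(-1,-1)\}$ ($j\ne i$), $Q_i=\{(0,m),(m,m),(-1,-1)\}$. (2) $\varphi=B_i\psi$: fresh $m\ge1$, $m\notin D^\psi$; $D^\varphi=D^\psi\sqcup\{m\}$; $\mathsf{pre}^\varphi$ extends $\mathsf{pre}^\psi$ with $\mathsf{pre}^\varphi(m)=\top$; $Q^\varphi_j=\underline{Q}^\psi_j\cup\{(0,-1)\}\cup\{(m,k)\mid(0,k)\in Q^\psi_j\}$ ($j\ne i$); $Q^\varphi_i=\underline{Q}^\psi_i\cup\{(0,m),(m,m)\}$. (3) $\varphi=B_i(\xi\wedge\psi)$: as (2) but $\mathsf{pre}^\varphi(m)=\xi$. (4) $\varphi=\psi\wedge\theta$: with $D^\psi\cap D^\theta=\varnothing$, $D^\varphi=D^\psi\sqcup D^\theta$, $\mathsf{pre}^\varphi=\mathsf{pre}^\psi\cup\mathsf{pre}^\theta$, $Q^\varphi_j=\underline{Q}^\psi_j\cup\underline{Q}^\theta_j\cup\{(0,k)\mid(0,k)\in Q^\psi_j\cup Q^\theta_j, k\in D^\psi\sqcup D^\theta\}\cup\{(0,-1)\mid\text{no such }k\text{ exists}\}$. *)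

theory Defs
  imports Main
begin

datatype ('ag, 'p) fm =
    Prop 'p
  | Neg "('ag, 'p) fm"
  | Conj "('ag, 'p) fm" "('ag, 'p) fm"
  | Bel 'ag "('ag, 'p) fm"

definition top :: "('ag, 'p) fm" where
  "top = Neg (Conj (Prop undefined) (Neg (Prop undefined)))"

fun propositional :: "('ag, 'p) fm \<Rightarrow> bool" where
  "propositional (Prop p) = True"
| "propositional (Neg a) = propositional a"
| "propositional (Conj a b) = (propositional a \<and> propositional b)"
| "propositional (Bel i a) = False"

fun ta :: "('ag, 'p) fm \<Rightarrow> 'ag set" where
  "ta (Prop p) = {}"
| "ta (Neg a) = ta a"
| "ta (Conj a b) = ta a \<union> ta b"
| "ta (Bel i a) = {i}"

inductive dbi_normal :: "('ag, 'p) fm \<Rightarrow> bool" where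
  dbi_prop: "propositional \<xi> \<Longrightarrow> dbi_normal (Bel i \<xi>)"
| dbi_bel: "dbi_normal \<psi> \<Longrightarrow> i \<notin> ta \<psi> \<Longrightarrow> dbi_normal (Bel i \<psi>)"
| dbi_bel_conj: "propositional \<xi> \<Longrightarrow> dbi_normal \<psi> \<Longrightarrow> i \<notin> ta \<psi>
      \<Longrightarrow> dbi_normal (Bel i (Conj \<xi> \<psi>))"
| dbi_conj: "dbi_normal \<psi> \<Longrightarrow> dbi_normal \<theta> \<Longrightarrow> ta \<psi> \<inter> ta \<theta> = {}
      \<Longrightarrow> dbi_normal (Conj \<psi> \<theta>)"

fun conjuncts :: "('ag, 'p) fm \<Rightarrow> ('ag, 'p) fm set" where
  "conjuncts (Conj a b) = conjuncts a \<union> conjuncts b"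
| "conjuncts (Prop p) = {Prop p}"
| "conjuncts (Neg a) = {Neg a}"
| "conjuncts (Bel i a) = {Bel i a}"

inductive bconj :: "('ag, 'p) fm \<Rightarrow> bool" where
  "bconj (Bel j \<pi>)"
| "bconj a \<Longrightarrow> bconj b \<Longrightarrow> bconj (Conj a b)"

record ('ag, 'w, 'p) kripke =
  worlds :: "'w set"
  rel :: "'ag \<Rightarrow> ('w \<times> 'w) set"
  val :: "'p \<Rightarrow> 'w set"

definition kripke :: "('ag, 'w, 'p, 'z) kripke_scheme \<Rightarrow> bool" where
  "kripke M \<longleftrightarrow> worlds M \<noteq> {} \<and> (\<forall>i. rel M i \<subseteq> worlds M \<times> worlds M)
     \<and> (\<forall>p. val M p \<subseteq> worlds M)"

fun sat :: "('ag, 'w, 'p) kripke \<Rightarrow> 'w \<Rightarrow> ('ag, 'p) fm \<Rightarrow> bool" where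
  "sat M w (Prop p) = (w \<in> val M p)"
| "sat M w (Neg a) = (\<not> sat M w a)"
| "sat M w (Conj a b) = (sat M w a \<and> sat M w b)"
| "sat M w (Bel i a) = (\<forall>u. (w, u) \<in> rel M i \<longrightarrow> sat M u a)"

record ('ag, 'p) amodel =
  adom :: "int set"   \<comment> \<open>the set D; the events are {0,-1} plus D\<close>
  aQ :: "'ag \<Rightarrow> (int \<times> int) set"
  apre :: "int \<Rightarrow> ('ag, 'p) fm"

definition events :: "('ag, 'p) amodel \<Rightarrow> int set" where
  "events U = {0, -1} \<union> adom U"

definition Tset :: "('ag, 'w, 'p) kripke \<Rightarrow> ('ag, 'p) amodel \<Rightarrow> ('w \<times> int) set" where
  "Tset M U = {(x, \<beta>). x \<in> worlds M \<and> \<beta> \<in> events U \<and> sat M x (apre U \<beta>)}"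

inductive_set reach :: "('ag, 'w, 'p) kripke \<Rightarrow> ('ag, 'p) amodel \<Rightarrow> 'w \<Rightarrow> int \<Rightarrow> ('w \<times> int) set"
  for M U w \<alpha> where
  base: "(w, \<alpha>) \<in> Tset M U \<Longrightarrow> (w, \<alpha>) \<in> reach M U w \<alpha>"
| step: "(x, \<beta>) \<in> reach M U w \<alpha> \<Longrightarrow> (u, \<gamma>) \<in> Tset M U \<Longrightarrow> (x, u) \<in> rel M i
      \<Longrightarrow> (\<beta>, \<gamma>) \<in> aQ U i \<Longrightarrow> (u, \<gamma>) \<in> reach M U w \<alpha>"

text \<open>Pointed update of (M,w) with (U,alpha) (meaningful when M,w satisfies pre alpha).\<close>
definition update :: "('ag, 'w, 'p) kripke \<Rightarrow> ('ag, 'p) amodel \<Rightarrow> 'w \<Rightarrow> int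
    \<Rightarrow> ('ag, 'w \<times> int, 'p) kripke" where
  "update M U w \<alpha> =
    \<lparr> worlds = reach M U w \<alpha>,
      rel = (\<lambda>i. {((x, \<beta>), (u, \<gamma>)). (x, \<beta>) \<in> reach M U w \<alpha> \<and> (u, \<gamma>) \<in> reach M U w \<alpha>
                     \<and> (x, u) \<in> rel M i \<and> (\<beta>, \<gamma>) \<in> aQ U i}),
      val = (\<lambda>p. {(x, \<beta>). (x, \<beta>) \<in> reach M U w \<alpha> \<and> x \<in> val M p}) \<rparr>"

definition qbar :: "('ag, 'p) amodel \<Rightarrow> 'ag \<Rightarrow> (int \<times> int) set" where
  "qbar U j = aQ U j \<inter> ((events U - {0}) \<times> (events U - {0}))"

inductive is_U :: "('ag, 'p) fm \<Rightarrow> ('ag, 'p) amodel \<Rightarrow> bool" where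
  U_prop: "propositional \<xi> \<Longrightarrow> m \<ge> 1 \<Longrightarrow>
    is_U (Bel i \<xi>)
      \<lparr> adom = {m},
        aQ = (\<lambda>j. if j = i then {(0, m), (m, m), (-1, -1)} else {(0, -1), (m, -1), (-1, -1)}),
        apre = (\<lambda>e. if e = m then \<xi> else top) \<rparr>"
| U_bel: "is_U \<psi> U \<Longrightarrow> m \<ge> 1 \<Longrightarrow> m \<notin> adom U \<Longrightarrow>
    is_U (Bel i \<psi>)
      \<lparr> adom = adom U \<union> {m},
        aQ = (\<lambda>j. if j = i then qbar U i \<union> {(0, m), (m, m)}
                  else qbar U j \<union> {(0, -1)} \<union> {(m, k) | k. (0, k) \<in> aQ U j}),
        apre = (apre U)(m := top) \<rparr>"
| U_bel_conj: "propositional \<xi> \<Longrightarrow> is_U \<psi> U \<Longrightarrow> m \<ge> 1 \<Longrightarrow> m \<notin> adom U \<Longrightarrow>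
    is_U (Bel i (Conj \<xi> \<psi>))
      \<lparr> adom = adom U \<union> {m},
        aQ = (\<lambda>j. if j = i then qbar U i \<union> {(0, m), (m, m)}
                  else qbar U j \<union> {(0, -1)} \<union> {(m, k) | k. (0, k) \<in> aQ U j}),
        apre = (apre U)(m := \<xi>) \<rparr>"
| U_conj: "is_U \<psi> U1 \<Longrightarrow> is_U \<theta> U2 \<Longrightarrow> adom U1 \<inter> adom U2 = {} \<Longrightarrow>
    is_U (Conj \<psi> \<theta>)
      \<lparr> adom = adom U1 \<union> adom U2,
        aQ = (\<lambda>j. qbar U1 j \<union> qbar U2 j
                 \<union> {(0, k) | k. (0, k) \<in> aQ U1 j \<union> aQ U2 j \<and> k \<in> adom U1 \<union> adom U2}
                 \<union> (if \<exists>k. (0, k) \<in> aQ U1 j \<union> aQ U2 j \<and> k \<in> adom U1 \<union> adom U2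
                    then {} else {(0, -1)})),
        apre = (\<lambda>e. if e \<in> adom U1 then apre U1 e else apre U2 e) \<rparr>"

end

theory Submission
  imports Defs
begin

text \<open>In \<open>U\<^sub>\<phi>\<close> the event \<open>-1\<close> has precondition \<open>\<top>\<close> and only itself as successor for
  every agent, so the states \<open>(x, -1)\<close> of the update form a bisimilar copy of \<open>M\<close>.
  If \<open>i \<notin> ta \<phi>\<close>, the only \<open>i\<close>-successor of the event \<open>0\<close> is \<open>-1\<close>, hence agent \<open>i\<close>'s
  beliefs at \<open>(v, 0)\<close> are exactly those at \<open>v\<close>. If \<open>B\<^sub>i \<omega>\<close> is a conjunct of \<open>\<phi>\<close> and \<open>\<omega>\<close> has
  no propositional component, the event introduced for it is an \<open>i\<close>-successor of \<open>0\<close>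
  with precondition \<open>\<top>\<close>; so every \<open>i\<close>-successor of \<open>v\<close> survives in the update, and
  propositional formulas only depend on the world component.\<close>

lemma sat_top [simp]: "sat M w top"
  by (simp add: top_def)

lemma kripke_rel_worlds: "kripke M \<Longrightarrow> (x, u) \<in> rel M j \<Longrightarrow> u \<in> worlds M"
  by (auto simp: kripke_def)

lemma reach_subset_Tset: "reach M U w \<alpha> \<subseteq> Tset M U"
  by (auto elim: reach.cases)

lemma sat_update_Bel:
  assumes "(x, \<beta>) \<in> reach M U w \<alpha>"
  shows "sat (update M U w \<alpha>) (x, \<beta>) (Bel j \<sigma>) \<longleftrightarrow>
    (\<forall>u \<gamma>. (x, u) \<in> rel M j \<longrightarrow> (\<beta>, \<gamma>) \<in> aQ U j \<longrightarrow> (u, \<gamma>) \<in> Tset M U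
       \<longrightarrow> sat (update M U w \<alpha>) (u, \<gamma>) \<sigma>)"
proof -
  have "(u, \<gamma>) \<in> reach M U w \<alpha> \<longleftrightarrow> (u, \<gamma>) \<in> Tset M U"
    if "(x, u) \<in> rel M j" "(\<beta>, \<gamma>) \<in> aQ U j" for u \<gamma>
    using reach.step[OF assms _ that] reach_subset_Tset by (meson subsetD)
  then show ?thesis
    using assms by (auto simp: update_def)
qed

lemma sat_update_propositional:
  assumes "propositional \<chi>" and "(x, \<beta>) \<in> reach M U w \<alpha>"
  shows "sat (update M U w \<alpha>) (x, \<beta>) \<chi> \<longleftrightarrow> sat M x \<chi>"
  using assms by (induction \<chi>) (auto simp: update_def)

definition copy_event :: "('ag, 'p) amodel \<Rightarrow> int \<Rightarrow> bool" where
  "copy_event U c \<longleftrightarrow> c \<in> events U \<and> apre U c = top \<and> (\<forall>j \<gamma>. (c, \<gamma>) \<in> aQ U j \<longleftrightarrow> \<gamma> = c)"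

lemma Tset_copy_event_iff:
  assumes "copy_event U c"
  shows "(u, c) \<in> Tset M U \<longleftrightarrow> u \<in> worlds M"
  using assms by (simp add: copy_event_def Tset_def)

lemma sat_update_copy_event:
  assumes "copy_event U c" and "kripke M" and "(x, c) \<in> reach M U w \<alpha>"
  shows "sat (update M U w \<alpha>) (x, c) \<sigma> \<longleftrightarrow> sat M x \<sigma>"
  using assms(3)
proof (induction \<sigma> arbitrary: x)
  case (Prop p)
  then show ?case by (simp add: update_def)
next
  case (Bel j \<sigma>)
  have succ_worlds: "(x, u) \<in> rel M j \<Longrightarrow> u \<in> worlds M" for u
    using kripke_rel_worlds[OF assms(2)] .
  have succ_reach: "(x, u) \<in> rel M j \<Longrightarrow> (u, c) \<in> reach M U w \<alpha>" for u
    using reach.step[OF Bel.prems] succ_worlds assms(1)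
    by (simp add: Tset_copy_event_iff copy_event_def)
  have "sat (update M U w \<alpha>) (x, c) (Bel j \<sigma>) \<longleftrightarrow>
      (\<forall>u. (x, u) \<in> rel M j \<longrightarrow> sat (update M U w \<alpha>) (u, c) \<sigma>)"
    using assms(1) succ_worlds
    by (subst sat_update_Bel[OF Bel.prems]) (auto simp: Tset_copy_event_iff copy_event_def)
  also have "\<dots> \<longleftrightarrow> sat M x (Bel j \<sigma>)"
    using Bel.IH succ_reach by simp
  finally show ?case .
qed simp_all

lemma sat_update_Bel_via_copy_event:
  assumes "copy_event U c" and "\<And>\<gamma>. (\<beta>, \<gamma>) \<in> aQ U i \<longleftrightarrow> \<gamma> = c"
    and "kripke M" and "(x, \<beta>) \<in> reach M U w \<alpha>"
  shows "sat (update M U w \<alpha>) (x, \<beta>) (Bel i \<sigma>) \<longleftrightarrow> sat M x (Bel i \<sigma>)"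
proof -
  have succ_worlds: "(x, u) \<in> rel M i \<Longrightarrow> u \<in> worlds M" for u
    using kripke_rel_worlds[OF assms(3)] .
  have succ_reach: "(x, u) \<in> rel M i \<Longrightarrow> (u, c) \<in> reach M U w \<alpha>" for u
    using reach.step[OF assms(4)] assms(1,2) succ_worlds by (simp add: Tset_copy_event_iff)
  have "sat (update M U w \<alpha>) (x, \<beta>) (Bel i \<sigma>) \<longleftrightarrow>
      (\<forall>u. (x, u) \<in> rel M i \<longrightarrow> sat (update M U w \<alpha>) (u, c) \<sigma>)"
    using assms(1,2) succ_worlds
    by (subst sat_update_Bel[OF assms(4)]) (auto simp: Tset_copy_event_iff)
  also have "\<dots> \<longleftrightarrow> sat M x (Bel i \<sigma>)"
    using sat_update_copy_event[OF assms(1,3)] succ_reach by simp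
  finally show ?thesis .
qed

lemma sat_update_Bel_propositional:
  assumes "(\<beta>, k) \<in> aQ U i" and "k \<in> events U" and "apre U k = top"
    and "propositional \<chi>" and "kripke M" and "(x, \<beta>) \<in> reach M U w \<alpha>"
  shows "sat (update M U w \<alpha>) (x, \<beta>) (Bel i \<chi>) \<longleftrightarrow> sat M x (Bel i \<chi>)"
proof -
  have succ_Tset: "(x, u) \<in> rel M i \<Longrightarrow> (u, k) \<in> Tset M U" for u
    using assms(2,3) kripke_rel_worlds[OF assms(5)] by (simp add: Tset_def)
  have on_worlds: "sat (update M U w \<alpha>) (u, \<gamma>) \<chi> \<longleftrightarrow> sat M u \<chi>"
    if "(x, u) \<in> rel M i" "(\<beta>, \<gamma>) \<in> aQ U i" "(u, \<gamma>) \<in> Tset M U" for u \<gamma>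
    using sat_update_propositional[OF assms(4) reach.step[OF assms(6) that(3,1,2)]] .
  show ?thesis
    unfolding sat_update_Bel[OF assms(6)] using on_worlds assms(1) succ_Tset by auto
qed

lemma is_U_adom_pos: "is_U \<phi> U \<Longrightarrow> k \<in> adom U \<Longrightarrow> 1 \<le> k"
  by (induction arbitrary: k rule: is_U.induct) auto

lemma is_U_apre_non_adom: "is_U \<phi> U \<Longrightarrow> k \<notin> adom U \<Longrightarrow> apre U k = top"
  by (induction arbitrary: k rule: is_U.induct) auto

lemma is_U_minus_one_successors: "is_U \<phi> U \<Longrightarrow> (-1, k) \<in> aQ U j \<longleftrightarrow> k = -1"
proof (induction arbitrary: k j rule: is_U.induct)
  case (U_bel \<psi> U m i)
  then show ?case using is_U_adom_pos[OF U_bel(1)] by (auto simp: qbar_def events_def)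
next
  case (U_bel_conj \<xi> \<psi> U m i)
  then show ?case using is_U_adom_pos[OF U_bel_conj(2)] by (auto simp: qbar_def events_def)
qed (auto simp: qbar_def events_def)

lemma is_U_copy_event: "is_U \<phi> U \<Longrightarrow> copy_event U (-1)"
  using is_U_adom_pos[of \<phi> U "-1"] is_U_apre_non_adom[of \<phi> U "-1"]
  by (force simp: copy_event_def events_def is_U_minus_one_successors)

lemma is_U_zero_successors_non_target:
  "is_U \<phi> U \<Longrightarrow> j \<notin> ta \<phi> \<Longrightarrow> (0, k) \<in> aQ U j \<longleftrightarrow> k = -1"
proof (induction arbitrary: k rule: is_U.induct)
  case (U_conj \<psi> U1 \<theta> U2)
  have "-1 \<notin> adom U1" "-1 \<notin> adom U2"
    using is_U_adom_pos[OF U_conj(1)] is_U_adom_pos[OF U_conj(2)] by force+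
  then show ?case
    using U_conj by (auto simp: qbar_def events_def)
qed (auto simp: qbar_def events_def)

lemma bconj_not_propositional: "bconj \<omega> \<Longrightarrow> \<not> propositional \<omega>"
  by (induction rule: bconj.induct) auto

text \<open>The witness is the event \<open>m\<close> of rule \<open>U_bel\<close>; rules \<open>U_prop\<close> and \<open>U_bel_conj\<close>
  cannot produce \<open>B\<^sub>i \<omega>\<close> with \<open>bconj \<omega>\<close>.\<close>

lemma is_U_trivial_zero_successor:
  "is_U \<phi> U \<Longrightarrow> Bel i \<omega> \<in> conjuncts \<phi> \<Longrightarrow> bconj \<omega> \<Longrightarrow>
     \<exists>k\<in>adom U. (0, k) \<in> aQ U i \<and> apre U k = top"
proof (induction rule: is_U.induct)
  case (U_prop \<xi> m i)
  then show ?case using bconj_not_propositional by auto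
next
  case (U_bel_conj \<xi> \<psi> U m i)
  then show ?case using bconj_not_propositional by (auto elim: bconj.cases)
next
  case (U_conj \<psi> U1 \<theta> U2)
  then show ?case by (auto simp: disjoint_iff)
qed auto

lemma is_U_reach_start: "is_U \<phi> U \<Longrightarrow> v \<in> worlds M \<Longrightarrow> (v, 0) \<in> reach M U v 0"
  using is_U_adom_pos[of \<phi> U 0] is_U_apre_non_adom[of \<phi> U 0]
  by (force intro!: reach.base simp: Tset_def events_def)

theorem corollary1:
  fixes \<phi> :: "('ag :: finite, 'p) fm" and U :: "('ag, 'p) amodel" and i :: 'ag
  assumes "card (UNIV :: 'ag set) \<ge> 2"
    and "dbi_normal \<phi>"
    and "is_U \<phi> U"
  shows "(i \<notin> ta \<phi> \<longrightarrow>
            (\<forall>(\<sigma> :: ('ag, 'p) fm) (M :: ('ag, 'w, 'p) kripke) v.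
               kripke M \<and> v \<in> worlds M \<longrightarrow>
               (sat M v (Bel i \<sigma>) \<longleftrightarrow> sat (update M U v 0) (v, 0) (Bel i \<sigma>))))
       \<and> (\<forall>\<omega>. i \<in> ta \<phi> \<and> Bel i \<omega> \<in> conjuncts \<phi> \<and> bconj \<omega> \<longrightarrow>
            (\<forall>(\<chi> :: ('ag, 'p) fm) (M :: ('ag, 'w, 'p) kripke) v.
               propositional \<chi> \<and> kripke M \<and> v \<in> worlds M \<longrightarrow>
               (sat M v (Bel i \<chi>) \<longleftrightarrow> sat (update M U v 0) (v, 0) (Bel i \<chi>))))"
proof (intro conjI impI allI; elim conjE)
  fix \<sigma> :: "('ag, 'p) fm" and M :: "('ag, 'w, 'p) kripke" and v
  assume "i \<notin> ta \<phi>" and M: "kripke M" and v: "v \<in> worlds M"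
  then have "\<And>\<gamma>. (0, \<gamma>) \<in> aQ U i \<longleftrightarrow> \<gamma> = -1"
    using is_U_zero_successors_non_target[OF assms(3)] by blast
  from sat_update_Bel_via_copy_event[OF is_U_copy_event[OF assms(3)] this M
      is_U_reach_start[OF assms(3) v]]
  show "sat M v (Bel i \<sigma>) \<longleftrightarrow> sat (update M U v 0) (v, 0) (Bel i \<sigma>)"
    by (rule sym)
next
  fix \<omega> and \<chi> :: "('ag, 'p) fm" and M :: "('ag, 'w, 'p) kripke" and v
  assume "Bel i \<omega> \<in> conjuncts \<phi>" "bconj \<omega>" and \<chi>: "propositional \<chi>"
    and M: "kripke M" and v: "v \<in> worlds M"
  then obtain k where k: "k \<in> adom U" "(0, k) \<in> aQ U i" "apre U k = top"
    using is_U_trivial_zero_successor[OF assms(3)] by blast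
  from k(1) have "k \<in> events U"
    by (simp add: events_def)
  from sat_update_Bel_propositional[OF k(2) this k(3) \<chi> M is_U_reach_start[OF assms(3) v]]
  show "sat M v (Bel i \<chi>) \<longleftrightarrow> sat (update M U v 0) (v, 0) (Bel i \<chi>)"
    by (rule sym)
qed

end
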